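(* Let $\mu_1\in\mathcal{M}_+(S^1)$ with $\mu_1\neq0$. Then the functional $\mathbb{S}_{\mu_1}:\mathcal{M}(S^1)\to[0,+\infty]$ defined by $\mathbb{S}_{\mu_1}(0)=0$ and \[ \mathbb{S}_{\mu_1}(\mu_0):=\frac{|\mu_0|(S^1)}{2}\,\mathcal{U}^2\Big(\frac{\mu_0}{|\mu_0|(S^1)},\frac{\mu_1}{|\mu_1|(S^1)}\Big)\quad(\mu_0\neq0) \] is convex and positively one-homogeneous.
   Context: $S^1$ is the unit circle in $\mathbb{C}$; $\mathcal{M}(S^1)$ is the space of finite signed Radon measures and $|\mu|$ the total variation measure. Wasserstein–Fisher–Rao distance: for $\mu_0,\mu_1\in\mathcal{M}(S^1)$, let $\Gamma(\mu_0,\mu_1)$ be the set of nonnegative Borel measures $\gamma$ on $\mathbb{C}\times\mathbb{C}$ with finite second moment such that $(\theta_i)_\#(r_i^2\gamma)=\mu_i$, $i=0,1$, with $r_i(x_0,x_1)=|x_i|$, $\theta_i(x_0,x_1)=x_i/|x_i|$ (a fixed arbitrary point of $S^1$ if $x_i=0$); $\mathcal{U}(\mu_0,\mu_1):=\inf_{\gamma\in\Gamma(\mu_0,\mu_1)}(\int|x-y|^2\,\mathrm{d}\gamma)^{1/2}$, and $\mathcal{U}=+\infty$ if $\Gamma$ is empty (in particular whenever one of the measures is not nonnegative). *)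

theory Defs
  imports "HOL-Analysis.Analysis"
begin

definition S1 :: "complex set" where
  "S1 = sphere 0 1"

definition S1M :: "complex measure" where
  "S1M = restrict_space borel S1"

text \<open>Finite signed (Radon) measures on S^1, represented as real-valued set functions
  that vanish outside the Borel subsets of S^1 and are countably additive.
  (On a compact metric space every finite signed Borel measure is Radon.)\<close>
definition signed_measure_S1 :: "(complex set \<Rightarrow> real) \<Rightarrow> bool" where
  "signed_measure_S1 \<mu> \<longleftrightarrow>
     (\<forall>A. A \<notin> sets S1M \<longrightarrow> \<mu> A = 0) \<and> \<mu> {} = 0 \<and>
     (\<forall>F::nat \<Rightarrow> complex set. range F \<subseteq> sets S1M \<longrightarrow> disjoint_family F \<longrightarrow>
        (\<lambda>i. \<mu> (F i)) sums \<mu> (\<Union>i. F i))"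

definition nonneg_measure_S1 :: "(complex set \<Rightarrow> real) \<Rightarrow> bool" where
  "nonneg_measure_S1 \<mu> \<longleftrightarrow> signed_measure_S1 \<mu> \<and> (\<forall>A. 0 \<le> \<mu> A)"

definition zero_sm :: "complex set \<Rightarrow> real" where
  "zero_sm = (\<lambda>A. 0)"

definition scale_sm :: "real \<Rightarrow> (complex set \<Rightarrow> real) \<Rightarrow> (complex set \<Rightarrow> real)" where
  "scale_sm c \<mu> = (\<lambda>A. c * \<mu> A)"

definition add_sm :: "(complex set \<Rightarrow> real) \<Rightarrow> (complex set \<Rightarrow> real) \<Rightarrow> (complex set \<Rightarrow> real)" where
  "add_sm \<mu> \<nu> = (\<lambda>A. \<mu> A + \<nu> A)"

definition total_variation :: "(complex set \<Rightarrow> real) \<Rightarrow> real" where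
  "total_variation \<mu> =
     (SUP P \<in> {P. finite P \<and> P \<subseteq> sets S1M \<and> disjoint P}. \<Sum>A\<in>P. \<bar>\<mu> A\<bar>)"

definition theta :: "complex \<Rightarrow> complex" where
  "theta x = (if x = 0 then 1 else x / complex_of_real (cmod x))"

text \<open>Admissible plans Gamma(mu0, mu1): nonnegative Borel measures on C x C with
  finite second moment whose radially weighted angular marginals are mu0, mu1.\<close>
definition plans :: "(complex set \<Rightarrow> real) \<Rightarrow> (complex set \<Rightarrow> real) \<Rightarrow> (complex \<times> complex) measure set" where
  "plans \<mu>0 \<mu>1 = {\<gamma>. sets \<gamma> = sets borel \<and>
      (\<integral>\<^sup>+ p. ennreal ((cmod (fst p))\<^sup>2 + (cmod (snd p))\<^sup>2) \<partial>\<gamma>) < \<infinity> \<and>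
      (\<forall>A \<in> sets S1M.
         0 \<le> \<mu>0 A \<and>
         (\<integral>\<^sup>+ p. ennreal ((cmod (fst p))\<^sup>2) * indicator A (theta (fst p)) \<partial>\<gamma>) = ennreal (\<mu>0 A) \<and>
         0 \<le> \<mu>1 A \<and>
         (\<integral>\<^sup>+ p. ennreal ((cmod (snd p))\<^sup>2) * indicator A (theta (snd p)) \<partial>\<gamma>) = ennreal (\<mu>1 A))}"

definition transport_cost :: "(complex \<times> complex) measure \<Rightarrow> ennreal" where
  "transport_cost \<gamma> = (\<integral>\<^sup>+ p. ennreal ((cmod (fst p - snd p))\<^sup>2) \<partial>\<gamma>)"

text \<open>Wasserstein--Fisher--Rao distance U; the infimum over the empty set is +infinity.
  The cost is finite for every plan (finite second moment), so enn2real is harmless.\<close>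
definition WFR :: "(complex set \<Rightarrow> real) \<Rightarrow> (complex set \<Rightarrow> real) \<Rightarrow> ennreal" where
  "WFR \<mu>0 \<mu>1 = (INF \<gamma> \<in> plans \<mu>0 \<mu>1. ennreal (sqrt (enn2real (transport_cost \<gamma>))))"

definition S_fun :: "(complex set \<Rightarrow> real) \<Rightarrow> (complex set \<Rightarrow> real) \<Rightarrow> ennreal" where
  "S_fun \<mu>1 \<mu>0 =
     (if \<mu>0 = zero_sm then 0
      else ennreal (total_variation \<mu>0 / 2) *
           (WFR (scale_sm (1 / total_variation \<mu>0) \<mu>0)
                (scale_sm (1 / total_variation \<mu>1) \<mu>1))\<^sup>2)"

end

theory Submission
  imports Defs
begin

text \<open>
  Positive scaling leaves the normalised measure \<open>\<mu>/|\<mu>|(S\<^sup>1)\<close> unchanged and multiplies the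
  mass by the scaling factor, which gives homogeneity. For convexity, a measure with a
  negative value admits no transport plan, so \<open>S\<close> is infinite there and only nonnegative
  \<open>\<mu>, \<nu>\<close> matter; on them the mass is linear. The normalisation of \<open>t\<mu> + (1-t)\<nu>\<close> is the
  convex combination of those of \<open>\<mu>\<close> and \<open>\<nu>\<close> with weight \<open>s = t|\<mu>| / |t\<mu> + (1-t)\<nu>|\<close>, and
  the mixture \<open>s\<gamma>\<^sub>1 + (1-s)\<gamma>\<^sub>2\<close> of two admissible plans is admissible for it with the mixed
  cost. Hence \<open>U\<^sup>2\<close> is convex in its first argument, and \<open>S\<close>, its perspective, is convex.
\<close>

lemma power2_strict_mono_ennreal: "(x::ennreal) < y \<Longrightarrow> x ^ 2 < y ^ 2"
  by (cases x; cases y) (auto simp: ennreal_power ennreal_less_iff power_strict_mono)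

lemma bij_power2_ennreal: "bij (\<lambda>x::ennreal. x ^ 2)"
proof (rule bijI)
  show "inj (\<lambda>x::ennreal. x ^ 2)"
    by (rule strict_mono_imp_inj_on) (simp add: strict_mono_def power2_strict_mono_ennreal)
  show "surj (\<lambda>x::ennreal. x ^ 2)"
  proof (rule surjI)
    fix y :: ennreal
    show "(if y = top then top else ennreal (sqrt (enn2real y))) ^ 2 = y"
      by (cases y) (auto simp: ennreal_power)
  qed
qed

lemma INF_power2_ennreal: "(INF i\<in>I. f i :: ennreal) ^ 2 = (INF i\<in>I. f i ^ 2)"
  using mono_bij_Inf[of "\<lambda>x::ennreal. x ^ 2" "f ` I"] bij_power2_ennreal
  by (simp add: mono_def power_mono image_comp)

lemma INF_mult_left_ennreal:
  assumes "0 < c"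
  shows "ennreal c * (INF i\<in>I. f i) = (INF i\<in>I. ennreal c * f i)"
proof -
  have "bij (\<lambda>x. ennreal c * x)"
    by (rule bij_betw_byWitness[where f' = "\<lambda>x. x / ennreal c"])
      (use assms in \<open>auto simp: ennreal_mult_divide_eq mult.commute[of "ennreal c"] ennreal_times_divide\<close>)
  then show ?thesis
    using mono_bij_Inf[of "\<lambda>x. ennreal c * x" "f ` I"] by (simp add: mono_def mult_left_mono image_comp)
qed

lemma INF_add_right_ennreal: "(INF i\<in>I. f i + c :: ennreal) = (INF i\<in>I. f i) + c"
proof (cases "I = {}")
  case False
  then show ?thesis
    using continuous_at_Inf_mono[of "\<lambda>x. x + c" "f ` I"]
      continuous_add[of "at_right (Inf (f ` I))" "\<lambda>x. x" "\<lambda>x. c"]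
    by (auto simp: mono_def image_comp)
qed simp

lemma INF_add_INF_ennreal:
  "(INF i\<in>I. INF j\<in>J. f i + g j :: ennreal) = (INF i\<in>I. f i) + (INF j\<in>J. g j)"
proof -
  have "(INF j\<in>J. f i + g j) = f i + (INF j\<in>J. g j)" for i
    using INF_add_right_ennreal[where f = g and c = "f i" and I = J] by (simp add: add.commute)
  then show ?thesis
    using INF_add_right_ennreal[where c = "INF j\<in>J. g j" and I = I] by simp
qed

subsection \<open>Sums of measures\<close>

definition add_measure :: "'a measure \<Rightarrow> 'a measure \<Rightarrow> 'a measure" where
  "add_measure M N = measure_of (space M) (sets M) (\<lambda>A. emeasure M A + emeasure N A)"

lemma sets_add_measure [simp]: "sets (add_measure M N) = sets M"
  unfolding add_measure_def by simp

lemma space_add_measure [simp]: "space (add_measure M N) = space M"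
  unfolding add_measure_def by simp

lemma emeasure_add_measure:
  assumes "sets N = sets M" "A \<in> sets M"
  shows "emeasure (add_measure M N) A = emeasure M A + emeasure N A"
  unfolding add_measure_def
proof (rule emeasure_measure_of_sigma)
  show "countably_additive (sets M) (\<lambda>A. emeasure M A + emeasure N A)"
    using assms(1) by (auto simp: countably_additive_def suminf_add[symmetric] suminf_emeasure)
qed (use assms in \<open>auto simp: positive_def sets.sigma_algebra_axioms\<close>)

lemma nn_integral_add_measure:
  assumes N: "sets N = sets M" and f: "f \<in> borel_measurable M"
  shows "(\<integral>\<^sup>+x. f x \<partial>add_measure M N) = (\<integral>\<^sup>+x. f x \<partial>M) + (\<integral>\<^sup>+x. f x \<partial>N)"
  using f
proof induction
  case (cong f g)
  have "space N = space M"
    using N by (rule sets_eq_imp_space_eq)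
  with cong show ?case
    by (metis (no_types, lifting) nn_integral_cong space_add_measure)
next
  case (set A)
  then show ?case using N by (simp add: emeasure_add_measure)
next
  case (mult f c)
  then show ?case
    using N by (simp add: nn_integral_cmult distrib_left cong: measurable_cong_sets)
next
  case (add f g)
  then show ?case
    using N by (simp add: nn_integral_add cong: measurable_cong_sets)
next
  case (seq U)
  have "U i \<in> borel_measurable N" "U i \<in> borel_measurable (add_measure M N)" for i
    using seq.hyps(1) N by (simp_all cong: measurable_cong_sets)
  with seq show ?case
    by (simp add: image_comp nn_integral_monotone_convergence_SUP incseq_nn_integral
        ennreal_SUP_add)
qed

definition mix_measure :: "real \<Rightarrow> 'a measure \<Rightarrow> 'a measure \<Rightarrow> 'a measure" where
  "mix_measure s M N = add_measure (scale_measure (ennreal s) M) (scale_measure (ennreal (1 - s)) N)"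

lemma sets_mix_measure [simp]: "sets (mix_measure s M N) = sets M"
  unfolding mix_measure_def by simp

lemma nn_integral_mix_measure:
  assumes "sets N = sets M" "f \<in> borel_measurable M"
  shows "(\<integral>\<^sup>+x. f x \<partial>mix_measure s M N) =
    ennreal s * (\<integral>\<^sup>+x. f x \<partial>M) + ennreal (1 - s) * (\<integral>\<^sup>+x. f x \<partial>N)"
  using assms unfolding mix_measure_def
  by (simp add: nn_integral_add_measure nn_integral_scale_measure cong: measurable_cong_sets)

subsection \<open>Countably additive real set functions\<close>

definition real_countably_additive :: "'a measure \<Rightarrow> ('a set \<Rightarrow> real) \<Rightarrow> bool" where
  "real_countably_additive M \<mu> \<longleftrightarrow> \<mu> {} = 0 \<and>
     (\<forall>F::nat \<Rightarrow> 'a set. range F \<subseteq> sets M \<longrightarrow> disjoint_family F \<longrightarrow>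
        (\<lambda>i. \<mu> (F i)) sums \<mu> (\<Union>i. F i))"

lemma real_countably_additiveD:
  assumes "real_countably_additive M \<mu>" "range F \<subseteq> sets M" "disjoint_family F"
  shows "(\<lambda>i. \<mu> (F i)) sums \<mu> (\<Union>i. F i)"
  using assms unfolding real_countably_additive_def by blast

lemma real_countably_additive_Un:
  assumes \<mu>: "real_countably_additive M \<mu>" and "A \<in> sets M" "B \<in> sets M" "A \<inter> B = {}"
  shows "\<mu> (A \<union> B) = \<mu> A + \<mu> B"
proof -
  have "range (binaryset A B) \<subseteq> sets M"
    using assms by (simp add: range_binaryset_eq)
  moreover have "disjoint_family (binaryset A B)"
    using assms(4) by (auto simp: disjoint_family_on_def binaryset_def)
  ultimately have "(\<lambda>i. \<mu> (binaryset A B i)) sums \<mu> (A \<union> B)"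
    using real_countably_additiveD[OF \<mu>] by (metis UN_binaryset_eq)
  moreover have "(\<lambda>i. \<mu> (binaryset A B i)) sums (\<mu> A + \<mu> B)"
    using \<mu> by (intro binaryset_sums) (simp add: real_countably_additive_def)
  ultimately show ?thesis
    by (rule sums_unique2)
qed

lemma real_countably_additive_Diff:
  assumes "real_countably_additive M \<mu>" "A \<in> sets M" "B \<in> sets M" "B \<subseteq> A"
  shows "\<mu> A = \<mu> B + \<mu> (A - B)"
  using real_countably_additive_Un[of M \<mu> B "A - B"] assms by (simp add: Un_absorb1)

lemma real_countably_additive_sum:
  assumes \<mu>: "real_countably_additive M \<mu>"
  shows "finite P \<Longrightarrow> P \<subseteq> sets M \<Longrightarrow> disjoint P \<Longrightarrow> (\<Sum>A\<in>P. \<mu> A) = \<mu> (\<Union>P)"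
proof (induction P rule: finite_induct)
  case empty
  then show ?case using \<mu> by (simp add: real_countably_additive_def)
next
  case (insert A P)
  have "A \<inter> \<Union>P = {}"
    using insert.hyps(2) insert.prems(2) by (auto simp: pairwise_def disjnt_def)
  moreover have "\<Union>P \<in> sets M"
    using insert by (intro sets.finite_Union) auto
  ultimately show ?case
    using insert real_countably_additive_Un[OF \<mu>, of A "\<Union>P"] by (simp add: pairwise_insert)
qed

lemma real_countably_additive_split_unbounded:
  assumes \<mu>: "real_countably_additive M \<mu>" and B: "B \<in> sets M"
    and unbounded: "\<forall>K. \<exists>C\<in>sets M. C \<subseteq> B \<and> K < \<bar>\<mu> C\<bar>"
  obtains B' where "B' \<in> sets M" "B' \<subseteq> B" "1 \<le> \<bar>\<mu> (B - B')\<bar>"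
    "\<forall>K. \<exists>C\<in>sets M. C \<subseteq> B' \<and> K < \<bar>\<mu> C\<bar>"
proof -
  obtain D where D: "D \<in> sets M" "D \<subseteq> B" "\<bar>\<mu> B\<bar> + 1 < \<bar>\<mu> D\<bar>"
    using unbounded by blast
  have BD: "B - D \<in> sets M"
    using B D(1) by blast
  have large: "1 \<le> \<bar>\<mu> D\<bar>" "1 \<le> \<bar>\<mu> (B - D)\<bar>"
    using real_countably_additive_Diff[OF \<mu> B D(1,2)] D(3) by auto
  have "(\<forall>K. \<exists>C\<in>sets M. C \<subseteq> D \<and> K < \<bar>\<mu> C\<bar>) \<or>
        (\<forall>K. \<exists>C\<in>sets M. C \<subseteq> B - D \<and> K < \<bar>\<mu> C\<bar>)"
  proof (rule ccontr)
    assume "\<not> ?thesis"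
    then obtain K1 K2 where
      K1: "\<And>C. C \<in> sets M \<Longrightarrow> C \<subseteq> D \<Longrightarrow> \<bar>\<mu> C\<bar> \<le> K1" and
      K2: "\<And>C. C \<in> sets M \<Longrightarrow> C \<subseteq> B - D \<Longrightarrow> \<bar>\<mu> C\<bar> \<le> K2"
      by (meson not_le)
    obtain C where C: "C \<in> sets M" "C \<subseteq> B" "K1 + K2 < \<bar>\<mu> C\<bar>"
      using unbounded by blast
    have "\<mu> C = \<mu> (C \<inter> D) + \<mu> (C - D)"
      using real_countably_additive_Diff[OF \<mu> C(1), of "C \<inter> D"] C(1) D(1) by (simp add: Diff_Int)
    moreover have "\<bar>\<mu> (C \<inter> D)\<bar> \<le> K1" "\<bar>\<mu> (C - D)\<bar> \<le> K2"
      using C D(1) by (auto intro!: K1 K2)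
    ultimately show False
      using C(3) by linarith
  qed
  then show ?thesis
  proof
    assume "\<forall>K. \<exists>C\<in>sets M. C \<subseteq> D \<and> K < \<bar>\<mu> C\<bar>"
    then show ?thesis
      using that[of D] D(1,2) large(2) by blast
  next
    assume "\<forall>K. \<exists>C\<in>sets M. C \<subseteq> B - D \<and> K < \<bar>\<mu> C\<bar>"
    moreover have "B - (B - D) = D"
      using D(2) by blast
    ultimately show ?thesis
      using that[of "B - D"] BD large(1) by simp
  qed
qed

text \<open>Boundedness is what makes the real supremum \<^const>\<open>total_variation\<close> meaningful.\<close>

lemma real_countably_additive_bounded:
  assumes \<mu>: "real_countably_additive M \<mu>"
  shows "\<exists>K. \<forall>A\<in>sets M. \<bar>\<mu> A\<bar> \<le> K"
proof (rule ccontr)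
  define unbounded where "unbounded B \<longleftrightarrow> B \<in> sets M \<and> (\<forall>K. \<exists>C\<in>sets M. C \<subseteq> B \<and> K < \<bar>\<mu> C\<bar>)"
    for B
  assume "\<not> ?thesis"
  then have "unbounded (space M)"
    by (auto simp: unbounded_def not_le) (meson sets.sets_into_space)
  moreover have "\<exists>B'. unbounded B' \<and> B' \<subseteq> B \<and> 1 \<le> \<bar>\<mu> (B - B')\<bar>" if "unbounded B" for B
    using real_countably_additive_split_unbounded[OF \<mu>, of B] that unfolding unbounded_def by metis
  \<comment> \<open>Splitting repeatedly gives disjoint sets \<open>E n\<close> with \<open>|\<mu> (E n)| \<ge> 1\<close>, although \<open>\<mu> (E n) \<longlonglongrightarrow> 0\<close>.\<close>
  ultimately obtain Bs where Bs: "\<And>n. unbounded (Bs n)" "\<And>n. Bs (Suc n) \<subseteq> Bs n"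
    "\<And>n. 1 \<le> \<bar>\<mu> (Bs n - Bs (Suc n))\<bar>"
    using dependent_nat_choice[of "\<lambda>_ B. unbounded B" "\<lambda>_ B B'. B' \<subseteq> B \<and> 1 \<le> \<bar>\<mu> (B - B')\<bar>"]
    by metis
  define E where "E n = Bs n - Bs (Suc n)" for n
  have "range E \<subseteq> sets M"
    using Bs(1) by (auto simp: E_def unbounded_def)
  moreover have "E m \<inter> E n = {}" if "m < n" for m n
  proof -
    have "Bs n \<subseteq> Bs (Suc m)"
      using lift_Suc_antimono_le[of Bs, OF Bs(2)] that by (simp add: Suc_leI)
    then show ?thesis
      by (auto simp: E_def)
  qed
  then have "disjoint_family E"
    unfolding disjoint_family_on_def by (metis Int_commute linorder_neqE_nat)
  ultimately have "(\<lambda>n. \<mu> (E n)) \<longlonglongrightarrow> 0"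
    using real_countably_additiveD[OF \<mu>] summable_LIMSEQ_zero sums_summable by blast
  then obtain n where "\<bar>\<mu> (E n)\<bar> < 1"
    using LIMSEQ_D[of _ 0 1] by force
  then show False
    using Bs(3)[of n] by (simp add: E_def)
qed

lemma real_countably_additive_bdd_above_partition_sums:
  assumes \<mu>: "real_countably_additive M \<mu>"
  shows "bdd_above ((\<lambda>P. \<Sum>A\<in>P. \<bar>\<mu> A\<bar>) ` {P. finite P \<and> P \<subseteq> sets M \<and> disjoint P})"
proof -
  obtain K where K: "\<And>A. A \<in> sets M \<Longrightarrow> \<bar>\<mu> A\<bar> \<le> K"
    using real_countably_additive_bounded[OF \<mu>] by blast
  have "(\<Sum>A\<in>P. \<bar>\<mu> A\<bar>) \<le> 2 * K" if P: "finite P" "P \<subseteq> sets M" "disjoint P" for P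
  proof -
    define Pos where "Pos = {A\<in>P. 0 \<le> \<mu> A}"
    define Neg where "Neg = {A\<in>P. \<mu> A < 0}"
    have parts: "finite Q" "Q \<subseteq> sets M" "disjoint Q" "\<Union>Q \<in> sets M" if "Q = Pos \<or> Q = Neg" for Q
      using that P by (auto simp: Pos_def Neg_def intro: pairwise_subset)
    have "P = Pos \<union> Neg" "Pos \<inter> Neg = {}"
      by (auto simp: Pos_def Neg_def)
    then have "(\<Sum>A\<in>P. \<bar>\<mu> A\<bar>) = (\<Sum>A\<in>Pos. \<bar>\<mu> A\<bar>) + (\<Sum>A\<in>Neg. \<bar>\<mu> A\<bar>)"
      using parts by (metis sum.union_disjoint)
    also have "\<dots> = (\<Sum>A\<in>Pos. \<mu> A) - (\<Sum>A\<in>Neg. \<mu> A)"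
      by (simp add: Pos_def Neg_def sum_negf[symmetric])
    also have "\<dots> = \<mu> (\<Union>Pos) - \<mu> (\<Union>Neg)"
      using parts by (simp add: real_countably_additive_sum[OF \<mu>])
    also have "\<dots> \<le> 2 * K"
      using K[of "\<Union>Pos"] K[of "\<Union>Neg"] parts by auto
    finally show ?thesis .
  qed
  then show ?thesis
    by (intro bdd_aboveI2) blast
qed

lemma signed_measure_S1_countably_additive:
  "signed_measure_S1 \<mu> \<Longrightarrow> real_countably_additive S1M \<mu>"
  unfolding signed_measure_S1_def real_countably_additive_def by blast

lemma signed_measure_S1_outside: "signed_measure_S1 \<mu> \<Longrightarrow> A \<notin> sets S1M \<Longrightarrow> \<mu> A = 0"
  unfolding signed_measure_S1_def by blast

lemma signed_measure_S1_scale_sm: "signed_measure_S1 \<mu> \<Longrightarrow> signed_measure_S1 (scale_sm c \<mu>)"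
  unfolding signed_measure_S1_def scale_sm_def by (auto intro: sums_mult)

lemma signed_measure_S1_add_sm:
  "signed_measure_S1 \<mu> \<Longrightarrow> signed_measure_S1 \<nu> \<Longrightarrow> signed_measure_S1 (add_sm \<mu> \<nu>)"
  unfolding signed_measure_S1_def add_sm_def by (auto intro: sums_add)

lemma space_S1M [simp]: "space S1M = S1"
  unfolding S1M_def by (simp add: space_restrict_space)

lemma abs_le_total_variation:
  assumes "signed_measure_S1 \<mu>" "A \<in> sets S1M"
  shows "\<bar>\<mu> A\<bar> \<le> total_variation \<mu>"
proof -
  have "\<bar>\<mu> A\<bar> = (\<Sum>B\<in>{A}. \<bar>\<mu> B\<bar>)"
    by simp
  also have "\<dots> \<le> total_variation \<mu>"
    unfolding total_variation_def
    by (rule cSUP_upper[OF _ real_countably_additive_bdd_above_partition_sums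
          [OF signed_measure_S1_countably_additive[OF assms(1)]]])
      (use assms(2) in simp)
  finally show ?thesis .
qed

lemma total_variation_nonneg_measure:
  assumes "nonneg_measure_S1 \<mu>"
  shows "total_variation \<mu> = \<mu> S1"
proof (rule antisym)
  have \<mu>: "real_countably_additive S1M \<mu>" and nonneg: "\<And>A. 0 \<le> \<mu> A"
    using assms signed_measure_S1_countably_additive by (auto simp: nonneg_measure_S1_def)
  have bound: "(\<Sum>A\<in>P. \<bar>\<mu> A\<bar>) \<le> \<mu> S1" if "finite P" "P \<subseteq> sets S1M" "disjoint P" for P
  proof -
    have P: "\<Union>P \<in> sets S1M" "\<Union>P \<subseteq> S1"
      using that sets.sets_into_space[of _ S1M] by auto
    have "(\<Sum>A\<in>P. \<bar>\<mu> A\<bar>) = \<mu> (\<Union>P)"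
      using real_countably_additive_sum[OF \<mu> that] nonneg by simp
    also have "\<dots> \<le> \<mu> S1"
      using real_countably_additive_Diff[OF \<mu> sets.top[of S1M, simplified] P] nonneg[of "S1 - \<Union>P"]
      by linarith
    finally show ?thesis .
  qed
  have "{} \<in> {P. finite P \<and> P \<subseteq> sets S1M \<and> disjoint P}"
    by simp
  then show "total_variation \<mu> \<le> \<mu> S1"
    unfolding total_variation_def by (intro cSUP_least bound) blast+
  show "\<mu> S1 \<le> total_variation \<mu>"
    using abs_le_total_variation[of \<mu> S1] assms sets.top[of S1M]
    by (simp add: nonneg_measure_S1_def)
qed

lemma total_variation_pos:
  assumes "signed_measure_S1 \<mu>" "\<mu> \<noteq> zero_sm"
  shows "0 < total_variation \<mu>"
proof -
  obtain A where "\<mu> A \<noteq> 0"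
    using assms(2) by (auto simp: zero_sm_def fun_eq_iff)
  moreover from this have "A \<in> sets S1M"
    using signed_measure_S1_outside[OF assms(1)] by blast
  ultimately show ?thesis
    using abs_le_total_variation[OF assms(1)] by fastforce
qed

lemma nonneg_measure_S1_mass_pos:
  assumes "nonneg_measure_S1 \<mu>" "\<mu> \<noteq> zero_sm"
  shows "0 < \<mu> S1"
  using total_variation_pos[of \<mu>] total_variation_nonneg_measure[of \<mu>] assms
  by (simp add: nonneg_measure_S1_def)

lemma nonneg_measure_S1_iff: "nonneg_measure_S1 \<mu> \<longleftrightarrow> signed_measure_S1 \<mu> \<and> \<not> (\<exists>A. \<mu> A < 0)"
  by (auto simp: nonneg_measure_S1_def not_less)

lemma S_fun_zero_sm [simp]: "S_fun \<nu> zero_sm = 0"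
  unfolding S_fun_def by simp

lemma S_fun_eq_top:
  assumes "signed_measure_S1 \<mu>" "\<mu> A < 0"
  shows "S_fun \<nu> \<mu> = top"
proof -
  have "A \<in> sets S1M"
    using assms signed_measure_S1_outside by fastforce
  have nonzero: "\<mu> \<noteq> zero_sm"
    using assms(2) by (auto simp: zero_sm_def)
  then have pos: "0 < total_variation \<mu>"
    by (rule total_variation_pos[OF assms(1)])
  then have "scale_sm (1 / total_variation \<mu>) \<mu> A < 0"
    using assms(2) by (simp add: scale_sm_def divide_neg_pos)
  with \<open>A \<in> sets S1M\<close> have "plans (scale_sm (1 / total_variation \<mu>) \<mu>) \<nu>' = {}" for \<nu>'
    unfolding plans_def by force
  then show ?thesis
    using nonzero pos by (simp add: S_fun_def WFR_def ennreal_mult_eq_top_iff)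
qed

lemma S_fun_nonneg_measure:
  assumes "nonneg_measure_S1 \<mu>" "\<mu> \<noteq> zero_sm"
  shows "S_fun \<nu> \<mu> = ennreal (\<mu> S1 / 2) *
    (WFR (scale_sm (1 / \<mu> S1) \<mu>) (scale_sm (1 / total_variation \<nu>) \<nu>))\<^sup>2"
  using assms by (simp add: S_fun_def total_variation_nonneg_measure)

lemma S_fun_scale_sm:
  assumes \<mu>: "signed_measure_S1 \<mu>" and c: "0 < c"
  shows "S_fun \<nu> (scale_sm c \<mu>) = ennreal c * S_fun \<nu> \<mu>"
proof (cases "\<mu> = zero_sm")
  case True
  moreover have "scale_sm c zero_sm = zero_sm"
    by (simp add: scale_sm_def zero_sm_def)
  ultimately show ?thesis
    by simp
next
  case nonzero: False
  show ?thesis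
  proof (cases "\<exists>A. \<mu> A < 0")
    case True
    then obtain A where A: "\<mu> A < 0"
      by blast
    then have "scale_sm c \<mu> A < 0"
      using c by (simp add: scale_sm_def mult_pos_neg)
    then have "S_fun \<nu> \<mu> = top" "S_fun \<nu> (scale_sm c \<mu>) = top"
      using S_fun_eq_top[OF \<mu> A] S_fun_eq_top[OF signed_measure_S1_scale_sm[OF \<mu>]] by auto
    then show ?thesis
      using c by (simp add: ennreal_mult_top)
  next
    case False
    then have "nonneg_measure_S1 \<mu>" "nonneg_measure_S1 (scale_sm c \<mu>)"
      using \<mu> c signed_measure_S1_scale_sm[OF \<mu>]
      by (auto simp: nonneg_measure_S1_iff scale_sm_def not_less)
    moreover have "scale_sm c \<mu> \<noteq> zero_sm"
      using nonzero c by (auto simp: scale_sm_def zero_sm_def fun_eq_iff)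
    moreover have "scale_sm (1 / (c * \<mu> S1)) (scale_sm c \<mu>) = scale_sm (1 / \<mu> S1) \<mu>"
      using c by (simp add: scale_sm_def fun_eq_iff)
    moreover have "ennreal (c * \<mu> S1 / 2) = ennreal c * ennreal (\<mu> S1 / 2)"
      using c nonneg_measure_S1_mass_pos[OF \<open>nonneg_measure_S1 \<mu>\<close> nonzero]
      by (simp add: ennreal_mult[symmetric])
    ultimately show ?thesis
      using S_fun_nonneg_measure[of \<mu>] S_fun_nonneg_measure[of "scale_sm c \<mu>"] nonzero
      by (simp add: scale_sm_def mult.assoc)
  qed
qed

subsection \<open>Transport plans and the squared distance\<close>

lemma borel_measurable_theta [measurable]: "theta \<in> borel_measurable borel"
  unfolding theta_def[abs_def] by measurable

lemma sets_S1M_subset_borel: "sets S1M \<subseteq> sets borel"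
proof -
  have "S1 \<in> sets borel"
    unfolding S1_def by (simp add: borel_closed)
  then show ?thesis
    unfolding S1M_def by (auto simp: sets_restrict_space_iff)
qed

lemma transport_cost_finite:
  assumes "\<gamma> \<in> plans P Q"
  shows "transport_cost \<gamma> < \<infinity>"
proof -
  have sets: "sets \<gamma> = sets borel"
    and moment: "(\<integral>\<^sup>+ p. ennreal ((cmod (fst p))\<^sup>2 + (cmod (snd p))\<^sup>2) \<partial>\<gamma>) < \<infinity>"
    using assms by (auto simp: plans_def)
  have "ennreal ((cmod (x - y))\<^sup>2) \<le> 2 * ennreal ((cmod x)\<^sup>2 + (cmod y)\<^sup>2)" for x y :: complex
  proof -
    have "(cmod (x - y))\<^sup>2 \<le> (cmod x + cmod y)\<^sup>2"
      by (simp add: power_mono norm_triangle_ineq4)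
    also have "\<dots> \<le> 2 * ((cmod x)\<^sup>2 + (cmod y)\<^sup>2)"
      using sum_squares_bound[of "cmod x" "cmod y"] by (simp add: power2_sum)
    finally show ?thesis
      by (metis ennreal_leI ennreal_mult' ennreal_numeral zero_le_numeral)
  qed
  then have "transport_cost \<gamma> \<le> (\<integral>\<^sup>+ p. 2 * ennreal ((cmod (fst p))\<^sup>2 + (cmod (snd p))\<^sup>2) \<partial>\<gamma>)"
    unfolding transport_cost_def by (intro nn_integral_mono) simp
  also have "\<dots> = 2 * (\<integral>\<^sup>+ p. ennreal ((cmod (fst p))\<^sup>2 + (cmod (snd p))\<^sup>2) \<partial>\<gamma>)"
    using sets by (intro nn_integral_cmult) (simp add: borel_prod[symmetric] cong: measurable_cong_sets)
  also have "\<dots> < \<infinity>"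
    using moment by (simp add: ennreal_mult_less_top)
  finally show ?thesis .
qed

lemma WFR_power2: "(WFR P Q)\<^sup>2 = (INF \<gamma>\<in>plans P Q. transport_cost \<gamma>)"
  unfolding WFR_def INF_power2_ennreal
proof (rule INF_cong[OF refl])
  fix \<gamma> assume "\<gamma> \<in> plans P Q"
  then show "(ennreal (sqrt (enn2real (transport_cost \<gamma>))))\<^sup>2 = transport_cost \<gamma>"
    using transport_cost_finite[of \<gamma>] by (simp add: ennreal_power ennreal_enn2real_if less_top)
qed

lemma transport_cost_mix_measure:
  assumes "sets \<gamma>1 = sets borel" "sets \<gamma>2 = sets borel"
  shows "transport_cost (mix_measure s \<gamma>1 \<gamma>2) =
    ennreal s * transport_cost \<gamma>1 + ennreal (1 - s) * transport_cost \<gamma>2"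
  using assms unfolding transport_cost_def
  by (intro nn_integral_mix_measure) (simp_all add: borel_prod[symmetric] cong: measurable_cong_sets)

lemma mix_measure_in_plans:
  assumes \<gamma>1: "\<gamma>1 \<in> plans P1 Q" and \<gamma>2: "\<gamma>2 \<in> plans P2 Q" and s: "0 \<le> s" "s \<le> 1"
  shows "mix_measure s \<gamma>1 \<gamma>2 \<in> plans (\<lambda>A. s * P1 A + (1 - s) * P2 A) Q"
proof -
  have "sets \<gamma>1 = sets borel" "sets \<gamma>2 = sets borel"
    using \<gamma>1 \<gamma>2 by (simp_all add: plans_def)
  then have [measurable_cong]: "sets \<gamma>1 = sets (borel \<Otimes>\<^sub>M borel)" and sets: "sets \<gamma>2 = sets \<gamma>1"
    by (simp_all only: borel_prod)
  note integral_mix = nn_integral_mix_measure[OF sets, of _ s]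
  have "(\<lambda>p. ennreal ((cmod (fst p))\<^sup>2 + (cmod (snd p))\<^sup>2)) \<in> borel_measurable \<gamma>1"
    by measurable
  then have "(\<integral>\<^sup>+ p. ennreal ((cmod (fst p))\<^sup>2 + (cmod (snd p))\<^sup>2) \<partial>mix_measure s \<gamma>1 \<gamma>2) < \<infinity>"
    using \<gamma>1 \<gamma>2 by (simp add: integral_mix plans_def ennreal_mult_less_top)
  moreover have
    "(\<integral>\<^sup>+ p. ennreal ((cmod (fst p))\<^sup>2) * indicator A (theta (fst p)) \<partial>mix_measure s \<gamma>1 \<gamma>2) =
       ennreal (s * P1 A + (1 - s) * P2 A)"
    "(\<integral>\<^sup>+ p. ennreal ((cmod (snd p))\<^sup>2) * indicator A (theta (snd p)) \<partial>mix_measure s \<gamma>1 \<gamma>2) =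
       ennreal (Q A)"
    "0 \<le> s * P1 A + (1 - s) * P2 A"
    if A: "A \<in> sets S1M" for A
  proof -
    have [measurable]: "A \<in> sets borel"
      using A sets_S1M_subset_borel by blast
    have "(\<lambda>p. ennreal ((cmod (fst p))\<^sup>2) * indicator A (theta (fst p))) \<in> borel_measurable \<gamma>1"
      "(\<lambda>p. ennreal ((cmod (snd p))\<^sup>2) * indicator A (theta (snd p))) \<in> borel_measurable \<gamma>1"
      by measurable
    moreover have "0 \<le> P1 A" "0 \<le> P2 A" "0 \<le> Q A"
      using \<gamma>1 \<gamma>2 A by (auto simp: plans_def)
    moreover have "ennreal s + ennreal (1 - s) = 1"
      using s by (simp flip: ennreal_plus)
    ultimately show
      "(\<integral>\<^sup>+ p. ennreal ((cmod (fst p))\<^sup>2) * indicator A (theta (fst p)) \<partial>mix_measure s \<gamma>1 \<gamma>2) =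
         ennreal (s * P1 A + (1 - s) * P2 A)"
      "(\<integral>\<^sup>+ p. ennreal ((cmod (snd p))\<^sup>2) * indicator A (theta (snd p)) \<partial>mix_measure s \<gamma>1 \<gamma>2) =
         ennreal (Q A)"
      "0 \<le> s * P1 A + (1 - s) * P2 A"
      using \<gamma>1 \<gamma>2 A s
      by (simp_all add: integral_mix plans_def ennreal_mult distrib_right[symmetric])
  qed
  ultimately show ?thesis
    using \<gamma>1 \<gamma>2 by (auto simp: plans_def)
qed

lemma WFR_power2_convex:
  assumes s: "0 < s" "s < 1"
  shows "(WFR (\<lambda>A. s * P1 A + (1 - s) * P2 A) Q)\<^sup>2 \<le>
    ennreal s * (WFR P1 Q)\<^sup>2 + ennreal (1 - s) * (WFR P2 Q)\<^sup>2"
proof -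
  have "(WFR (\<lambda>A. s * P1 A + (1 - s) * P2 A) Q)\<^sup>2 \<le>
      (INF \<gamma>1\<in>plans P1 Q. INF \<gamma>2\<in>plans P2 Q. transport_cost (mix_measure s \<gamma>1 \<gamma>2))"
    unfolding WFR_power2 using s by (intro INF_greatest INF_lower mix_measure_in_plans) auto
  also have "\<dots> = (INF \<gamma>1\<in>plans P1 Q. INF \<gamma>2\<in>plans P2 Q.
      ennreal s * transport_cost \<gamma>1 + ennreal (1 - s) * transport_cost \<gamma>2)"
    by (intro INF_cong refl transport_cost_mix_measure) (simp_all add: plans_def)
  also have "\<dots> = ennreal s * (WFR P1 Q)\<^sup>2 + ennreal (1 - s) * (WFR P2 Q)\<^sup>2"
    unfolding WFR_power2 INF_add_INF_ennreal using s by (simp add: INF_mult_left_ennreal)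
  finally show ?thesis .
qed

subsection \<open>Convexity of the functional\<close>

lemma scale_sm_add_sm_perspective:
  assumes "m \<noteq> 0" "n \<noteq> 0" "r \<noteq> 0" "r = t * m + (1 - t) * n"
  shows "scale_sm (1 / r) (add_sm (scale_sm t \<mu>) (scale_sm (1 - t) \<nu>)) =
    (\<lambda>A. (t * m / r) * scale_sm (1 / m) \<mu> A + (1 - t * m / r) * scale_sm (1 / n) \<nu> A)"
proof -
  have "1 - t * m / r = (1 - t) * n / r"
    using assms(3,4) by (simp add: field_simps)
  then show ?thesis
    using assms(1,2) by (simp add: fun_eq_iff scale_sm_def add_sm_def add_divide_distrib)
qed

lemma S_fun_convex_nonneg_measure:
  assumes \<mu>: "nonneg_measure_S1 \<mu>" "\<mu> \<noteq> zero_sm" and \<nu>: "nonneg_measure_S1 \<nu>" "\<nu> \<noteq> zero_sm"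
    and t: "0 < t" "t < 1"
  shows "S_fun \<mu>1 (add_sm (scale_sm t \<mu>) (scale_sm (1 - t) \<nu>))
    \<le> ennreal t * S_fun \<mu>1 \<mu> + ennreal (1 - t) * S_fun \<mu>1 \<nu>"
proof -
  define \<rho> where "\<rho> = add_sm (scale_sm t \<mu>) (scale_sm (1 - t) \<nu>)"
  define W where "W \<mu>' = (WFR \<mu>' (scale_sm (1 / total_variation \<mu>1) \<mu>1))\<^sup>2" for \<mu>'
  define m n where "m = \<mu> S1" and "n = \<nu> S1"
  define r where "r = t * m + (1 - t) * n"
  define s where "s = t * m / r"
  have m: "0 < m" and n: "0 < n"
    using nonneg_measure_S1_mass_pos \<mu> \<nu> by (simp_all add: m_def n_def)
  have r: "0 < r"
    using m n t by (simp add: r_def add_pos_pos)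
  have s: "0 < s" "s < 1" and one_minus_s: "1 - s = (1 - t) * n / r"
    using m n t r by (simp_all add: s_def r_def field_simps)
  have "nonneg_measure_S1 \<rho>"
    using \<mu> \<nu> t signed_measure_S1_add_sm signed_measure_S1_scale_sm
    by (auto simp: nonneg_measure_S1_def \<rho>_def add_sm_def scale_sm_def)
  moreover have "\<rho> S1 = r"
    by (simp add: \<rho>_def add_sm_def scale_sm_def m_def n_def r_def)
  moreover from this have "\<rho> \<noteq> zero_sm"
    using r by (auto simp: zero_sm_def)
  ultimately have "S_fun \<mu>1 \<rho> = ennreal (r / 2) *
      W (\<lambda>A. s * scale_sm (1 / m) \<mu> A + (1 - s) * scale_sm (1 / n) \<nu> A)"
    using scale_sm_add_sm_perspective[of m n r t \<mu> \<nu>] m n r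
    by (simp add: S_fun_nonneg_measure W_def \<rho>_def r_def s_def)
  also have "\<dots> \<le> ennreal (r / 2) *
      (ennreal s * W (scale_sm (1 / m) \<mu>) + ennreal (1 - s) * W (scale_sm (1 / n) \<nu>))"
    unfolding W_def by (intro mult_left_mono WFR_power2_convex s) simp
  also have "\<dots> = ennreal t * (ennreal (m / 2) * W (scale_sm (1 / m) \<mu>)) +
      ennreal (1 - t) * (ennreal (n / 2) * W (scale_sm (1 / n) \<nu>))"
  proof -
    have "ennreal (r / 2) * ennreal s = ennreal t * ennreal (m / 2)"
      "ennreal (r / 2) * ennreal (1 - s) = ennreal (1 - t) * ennreal (n / 2)"
      using s t m n r unfolding one_minus_s by (simp_all add: ennreal_mult[symmetric] s_def)
    then show ?thesis
      by (simp add: distrib_left mult.assoc[symmetric])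
  qed
  also have "\<dots> = ennreal t * S_fun \<mu>1 \<mu> + ennreal (1 - t) * S_fun \<mu>1 \<nu>"
    using \<mu> \<nu> by (simp add: S_fun_nonneg_measure W_def m_def n_def)
  finally show ?thesis
    unfolding \<rho>_def .
qed

lemma S_fun_convex:
  assumes \<mu>: "signed_measure_S1 \<mu>" and \<nu>: "signed_measure_S1 \<nu>" and t: "0 \<le> t" "t \<le> 1"
  shows "S_fun \<mu>1 (add_sm (scale_sm t \<mu>) (scale_sm (1 - t) \<nu>))
    \<le> ennreal t * S_fun \<mu>1 \<mu> + ennreal (1 - t) * S_fun \<mu>1 \<nu>"
proof -
  consider "t = 0" | "t = 1" | "0 < t" "\<exists>A. \<mu> A < 0" | "t < 1" "\<exists>A. \<nu> A < 0"
    | "\<mu> = zero_sm" | "\<nu> = zero_sm"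
    | "nonneg_measure_S1 \<mu>" "\<mu> \<noteq> zero_sm" "nonneg_measure_S1 \<nu>" "\<nu> \<noteq> zero_sm" "0 < t" "t < 1"
    using \<mu> \<nu> t by (fastforce simp: nonneg_measure_S1_iff)
  then show ?thesis
  proof cases
    case 1
    then show ?thesis
      by (simp add: add_sm_def scale_sm_def)
  next
    case 2
    then show ?thesis
      by (simp add: add_sm_def scale_sm_def)
  next
    case 3
    then show ?thesis
      using S_fun_eq_top[OF \<mu>] by (auto simp: ennreal_mult_top)
  next
    case 4
    then show ?thesis
      using S_fun_eq_top[OF \<nu>] by (auto simp: ennreal_mult_top)
  next
    case 5
    then have "add_sm (scale_sm t \<mu>) (scale_sm (1 - t) \<nu>) = scale_sm (1 - t) \<nu>"
      by (simp add: fun_eq_iff add_sm_def scale_sm_def zero_sm_def)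
    then show ?thesis
      using 5 S_fun_scale_sm[OF \<nu>, of "1 - t"] t by (cases "t = 1") (auto simp: add_sm_def scale_sm_def)
  next
    case 6
    then have "add_sm (scale_sm t \<mu>) (scale_sm (1 - t) \<nu>) = scale_sm t \<mu>"
      by (simp add: fun_eq_iff add_sm_def scale_sm_def zero_sm_def)
    then show ?thesis
      using 6 S_fun_scale_sm[OF \<mu>, of t] t by (cases "t = 0") (auto simp: add_sm_def scale_sm_def)
  next
    case 7
    then show ?thesis
      by (rule S_fun_convex_nonneg_measure)
  qed
qed

theorem proposition4p6:
  fixes \<mu>1 :: "complex set \<Rightarrow> real"
  assumes "nonneg_measure_S1 \<mu>1" and "\<mu>1 \<noteq> zero_sm"
  shows "(\<forall>\<mu> \<nu> t. signed_measure_S1 \<mu> \<longrightarrow> signed_measure_S1 \<nu> \<longrightarrow> 0 \<le> t \<longrightarrow> t \<le> 1 \<longrightarrow>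
            S_fun \<mu>1 (add_sm (scale_sm t \<mu>) (scale_sm (1 - t) \<nu>))
              \<le> ennreal t * S_fun \<mu>1 \<mu> + ennreal (1 - t) * S_fun \<mu>1 \<nu>)
       \<and> (\<forall>\<mu> c. signed_measure_S1 \<mu> \<longrightarrow> 0 < c \<longrightarrow>
            S_fun \<mu>1 (scale_sm c \<mu>) = ennreal c * S_fun \<mu>1 \<mu>)"
  using S_fun_convex S_fun_scale_sm by blast

end
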